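(* CAP has exactly one solution, and for any auxiliary function $g:I\to\mathbb{R}$ and any $h\in I$ solving WFP (i.e. $\beta(h)=b$), this unique solution is $(\theta_1(h),\dots,\theta_k(h))$; moreover such an $h$ exists.
   Context: Let $s:[0,B]\to[0,\infty)$ satisfy $s(0)=0$, be strictly increasing, strictly concave, differentiable, with $s'$ continuous on $[0,B]$ (so $s'>0$ is strictly decreasing). Fix $b\in(0,B]$, an integer $k\ge2$, and constants $c_1\ge c_2\ge\cdots\ge c_k>0$. The Constrained Allocation Problem (CAP) is: find $\theta_1,\dots,\theta_k\ge0$ such that (i) $\theta_1+\cdots+\theta_k=b$; (ii) $\theta_1\le\theta_2\le\cdots\le\theta_k$; (iii) $s'(\theta_j)/s'(\theta_i)=c_j/c_i$ whenever $i<j$ and $\theta_j\ge\theta_i>0$; (iv) $s'(\theta_j)/s'(0)\ge c_j/c_i$ whenever $i<j$ and $\theta_j>\theta_i=0$. Let $s'^{(-1)}:[s'(b),s'(0)]\to[0,b]$ denote the inverse of $s'$ restricted to $[0,b]$. An auxiliary function is a continuous, strictly decreasing function $g:I\to\mathbb{R}$ on an interval $I\subseteq\mathbb{R}$ for which there exist $h_{lo}<h_{hi}$ in $I$ with $g(h_{hi})\le s'(b)/c_1$ and $g(h_{lo})\ge s'(0)/c_k$. For $i=1,\dots,k$ and $h\in I$ define $\theta_i(h)=0$ if $c_ig(h)\ge s'(0)$; $\theta_i(h)=s'^{(-1)}(c_ig(h))$ if $s'(b)<c_ig(h)<s'(0)$; and $\theta_i(h)=b$ if $c_ig(h)\le s'(b)$.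 Let $\beta(h)=\sum_{i=1}^k\theta_i(h)$. The Water-Filling Problem (WFP) is: find $h\in I$ with $\beta(h)=b$. *)

theory Defs
  imports "HOL-Analysis.Analysis"
begin

definition strictly_concave_on :: "real set \<Rightarrow> (real \<Rightarrow> real) \<Rightarrow> bool" where
  "strictly_concave_on S f \<longleftrightarrow>
     (\<forall>x\<in>S. \<forall>y\<in>S. \<forall>t::real. x \<noteq> y \<and> 0 < t \<and> t < 1 \<longrightarrow>
        f ((1 - t) * x + t * y) > (1 - t) * f x + t * f y)"

text \<open>Constrained Allocation Problem: \<open>th i\<close> for \<open>i \<in> {1..k}\<close> is a solution.
  \<open>ds\<close> is the derivative s'.\<close>
definition cap_solution ::
  "(real \<Rightarrow> real) \<Rightarrow> real \<Rightarrow> nat \<Rightarrow> (nat \<Rightarrow> real) \<Rightarrow> (nat \<Rightarrow> real) \<Rightarrow> bool" where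
  "cap_solution ds b k c th \<longleftrightarrow>
     (\<forall>i\<in>{1..k}. th i \<ge> 0) \<and>
     (\<Sum>i=1..k. th i) = b \<and>
     (\<forall>i\<in>{1..k}. \<forall>j\<in>{1..k}. i \<le> j \<longrightarrow> th i \<le> th j) \<and>
     (\<forall>i\<in>{1..k}. \<forall>j\<in>{1..k}. i < j \<and> th j \<ge> th i \<and> th i > 0 \<longrightarrow>
        ds (th j) / ds (th i) = c j / c i) \<and>
     (\<forall>i\<in>{1..k}. \<forall>j\<in>{1..k}. i < j \<and> th j > th i \<and> th i = 0 \<longrightarrow>
        ds (th j) / ds 0 \<ge> c j / c i)"

definition auxiliary_function ::
  "(real \<Rightarrow> real) \<Rightarrow> real \<Rightarrow> nat \<Rightarrow> (nat \<Rightarrow> real) \<Rightarrow> real set \<Rightarrow> (real \<Rightarrow> real) \<Rightarrow> bool" where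
  "auxiliary_function ds b k c I g \<longleftrightarrow>
     is_interval I \<and> continuous_on I g \<and>
     (\<forall>x\<in>I. \<forall>y\<in>I. x < y \<longrightarrow> g y < g x) \<and>
     (\<exists>hlo\<in>I. \<exists>hhi\<in>I. hlo < hhi \<and> g hhi \<le> ds b / c 1 \<and> g hlo \<ge> ds 0 / c k)"

definition wf_theta ::
  "(real \<Rightarrow> real) \<Rightarrow> real \<Rightarrow> (nat \<Rightarrow> real) \<Rightarrow> (real \<Rightarrow> real) \<Rightarrow> nat \<Rightarrow> real \<Rightarrow> real" where
  "wf_theta ds b c g i h =
     (if c i * g h \<ge> ds 0 then 0
      else if c i * g h \<le> ds b then b
      else the_inv_into {0..b} ds (c i * g h))"

definition wf_beta ::
  "(real \<Rightarrow> real) \<Rightarrow> real \<Rightarrow> nat \<Rightarrow> (nat \<Rightarrow> real) \<Rightarrow> (real \<Rightarrow> real) \<Rightarrow> real \<Rightarrow> real" where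
  "wf_beta ds b k c g h = (\<Sum>i=1..k. wf_theta ds b c g i h)"

end

theory Submission
  imports Defs
begin

(* Comparing the derivatives at the ends of [x, y] with the slopes of s on the two halves shows
   that strict concavity makes s' strictly decreasing, so s' has a continuous inverse on [0, b].
   Clamping it gives the allocation alloc y in [0, b] at marginal value y, and
   theta_i(h) = alloc (c_i g(h)). A CAP solution is exactly the vector (alloc (c_i l))_i for a
   water level l whose total allocation is b; the level is s'(theta_k) / c_k. Every term
   alloc (c_i l) is antitone in l, so two levels with the same total give the same terms.
   Such a level exists by the intermediate value theorem, and again by that theorem the
   decreasing auxiliary function g attains it. *)

lemma concave_on_if_strictly_concave_on:
  assumes "strictly_concave_on S f" "convex S"
  shows "concave_on S f"
  using assms by (intro concave_on_linorderI) (auto simp: strictly_concave_on_def less_imp_le)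

lemma concave_on_slope_le_deriv_at_left:
  fixes f :: "real \<Rightarrow> real"
  assumes "concave_on {x..y} f" "x < y" "(f has_real_derivative D) (at x within {x..y})"
  shows "(f y - f x) / (y - x) \<le> D"
proof (rule tendsto_lowerbound)
  show "((\<lambda>t. (f t - f x) / (t - x)) \<longlongrightarrow> D) (at_right x)"
    using assms(3) by (simp add: has_field_derivative_iff at_within_Icc_at_right[OF \<open>x < y\<close>])
  show "\<forall>\<^sub>F t in at_right x. (f y - f x) / (y - x) \<le> (f t - f x) / (t - x)"
    using eventually_at_right_real[OF \<open>x < y\<close>]
  proof eventually_elim
    case (elim t)
    then have "(f y - f x) / (y - x) * (t - x) + f x \<le> f t"
      using concave_onD_Icc'[OF assms(1)] by simp
    with elim show ?case by (simp add: field_simps)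
  qed
qed simp

lemma concave_on_deriv_at_right_le_slope:
  fixes f :: "real \<Rightarrow> real"
  assumes "concave_on {x..y} f" "x < y" "(f has_real_derivative D) (at y within {x..y})"
  shows "D \<le> (f y - f x) / (y - x)"
proof (rule tendsto_upperbound)
  show "((\<lambda>t. (f t - f y) / (t - y)) \<longlongrightarrow> D) (at_left y)"
    using assms(3) by (simp add: has_field_derivative_iff at_within_Icc_at_left[OF \<open>x < y\<close>])
  show "\<forall>\<^sub>F t in at_left y. (f t - f y) / (t - y) \<le> (f y - f x) / (y - x)"
    using eventually_at_left_real[OF \<open>x < y\<close>]
  proof eventually_elim
    case (elim t)
    then have "(f x - f y) / (y - x) * (y - t) + f y \<le> f t"
      using concave_onD_Icc''[OF assms(1)] by simp
    with elim show ?case by (simp add: field_simps)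
  qed
qed simp

lemma strictly_concave_on_deriv_strict_antimono:
  fixes f f' :: "real \<Rightarrow> real"
  assumes conc: "strictly_concave_on {a..b} f"
    and deriv: "\<And>x. x \<in> {a..b} \<Longrightarrow> (f has_real_derivative f' x) (at x within {a..b})"
    and xy: "a \<le> x" "x < y" "y \<le> b"
  shows "f' y < f' x"
proof -
  define m where "m = (x + y) / 2"
  have m: "x < m" "m < y" "m - x = y - m" using xy by (simp_all add: m_def field_simps)
  have conc': "concave_on {u..v} f" if "a \<le> u" "v \<le> b" for u v
    using concave_on_if_strictly_concave_on[OF conc convex_real_interval(5)] that
    unfolding concave_on_def by (elim convex_on_subset) auto
  have "f' x \<ge> (f m - f x) / (m - x)"
    using xy m by (intro concave_on_slope_le_deriv_at_left conc' DERIV_subset[OF deriv]) auto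
  moreover have "f' y \<le> (f y - f m) / (y - m)"
    using xy m by (intro concave_on_deriv_at_right_le_slope conc' DERIV_subset[OF deriv]) auto
  moreover have "f ((1 - 1/2) * x + 1/2 * y) > (1 - 1/2) * f x + 1/2 * f y"
    using conc[unfolded strictly_concave_on_def, rule_format, of x y "1/2"] xy by simp
  then have "f y - f m < f m - f x" by (simp add: m_def field_simps)
  then have "(f y - f m) / (y - m) < (f m - f x) / (m - x)"
    unfolding \<open>m - x = y - m\<close> using m by (intro divide_strict_right_mono) auto
  ultimately show ?thesis by linarith
qed

locale decreasing_marginal =
  fixes ds :: "real \<Rightarrow> real" and b :: real
  assumes b_pos: "0 < b"
    and ds_strict_antimono: "\<And>x y. 0 \<le> x \<Longrightarrow> x < y \<Longrightarrow> y \<le> b \<Longrightarrow> ds y < ds x"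
    and ds_cont: "continuous_on {0..b} ds"
    and ds_b_pos: "0 < ds b"
begin

definition alloc :: "real \<Rightarrow> real" where
  "alloc y = the_inv_into {0..b} ds (max (ds b) (min (ds 0) y))"

lemma ds_b_less_ds_0: "ds b < ds 0"
  using ds_strict_antimono[of 0 b] b_pos by simp

lemma inj_on_ds: "inj_on ds {0..b}"
proof (rule linorder_inj_onI)
  fix x y assume "x < y" "x \<in> {0..b}" "y \<in> {0..b}"
  then show "ds x \<noteq> ds y" using ds_strict_antimono[of x y] by auto
qed auto

lemma ds_image: "ds ` {0..b} = {ds b..ds 0}"
proof
  have "ds x \<in> {ds b..ds 0}" if "x \<in> {0..b}" for x
    using that ds_strict_antimono[of 0 x] ds_strict_antimono[of x b]
    by (cases "x = 0"; cases "x = b") auto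
  then show "ds ` {0..b} \<subseteq> {ds b..ds 0}" by blast
  show "{ds b..ds 0} \<subseteq> ds ` {0..b}"
  proof
    fix y assume "y \<in> {ds b..ds 0}"
    then have "\<exists>x. 0 \<le> x \<and> x \<le> b \<and> ds x = y"
      using b_pos by (intro IVT2' ds_cont) auto
    then show "y \<in> ds ` {0..b}" by force
  qed
qed

lemma alloc_in: "alloc y \<in> {0..b}"
  unfolding alloc_def using ds_b_less_ds_0
  by (intro the_inv_into_into[OF inj_on_ds]) (auto simp: ds_image)

lemma ds_alloc: "ds (alloc y) = max (ds b) (min (ds 0) y)"
  unfolding alloc_def using ds_b_less_ds_0
  by (intro f_the_inv_into_f[OF inj_on_ds]) (auto simp: ds_image)

lemma alloc_eq_iff: "x \<in> {0..b} \<Longrightarrow> alloc y = x \<longleftrightarrow> ds (alloc y) = ds x"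
  using inj_on_ds alloc_in by (auto dest: inj_onD)

lemma alloc_ds:
  assumes "x \<in> {0..b}"
  shows "alloc (ds x) = x"
proof -
  have "ds x \<in> {ds b..ds 0}" using assms ds_image by blast
  with assms show ?thesis by (auto simp: alloc_eq_iff ds_alloc)
qed

lemma alloc_eq_0_iff: "alloc y = 0 \<longleftrightarrow> ds 0 \<le> y"
  using alloc_eq_iff[of 0 y] b_pos ds_b_less_ds_0 by (simp add: ds_alloc max_def min_def)

lemma alloc_eq_b_iff: "alloc y = b \<longleftrightarrow> y \<le> ds b"
  using alloc_eq_iff[of b y] b_pos ds_b_less_ds_0 by (simp add: ds_alloc max_def min_def)

lemma alloc_antimono:
  assumes "y \<le> z"
  shows "alloc z \<le> alloc y"
proof (rule ccontr)
  assume "\<not> alloc z \<le> alloc y"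
  then have "ds (alloc z) < ds (alloc y)"
    using ds_strict_antimono alloc_in by simp
  with assms show False by (auto simp: ds_alloc min_def max_def split: if_splits)
qed

lemma continuous_alloc: "continuous_on A alloc"
proof -
  have "\<forall>x\<in>{0..b}. the_inv_into {0..b} ds (ds x) = x"
    using the_inv_into_f_f[OF inj_on_ds] by blast
  from continuous_on_inv[OF ds_cont compact_Icc this]
  have inv: "continuous_on {ds b..ds 0} (the_inv_into {0..b} ds)"
    by (simp only: ds_image)
  have clamp: "continuous_on A (\<lambda>y. max (ds b) (min (ds 0) y))"
    by (intro continuous_intros)
  show ?thesis
    unfolding alloc_def using ds_b_less_ds_0
    by (intro continuous_on_compose2[OF inv clamp]) auto
qed

lemma wf_theta_eq_alloc: "wf_theta ds b c g i h = alloc (c i * g h)"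
proof -
  consider "ds 0 \<le> c i * g h" | "c i * g h \<le> ds b" | "ds b < c i * g h" "c i * g h < ds 0"
    by linarith
  then show ?thesis
  proof cases
    case 1
    then show ?thesis using alloc_eq_0_iff[of "c i * g h"] by (simp add: wf_theta_def)
  next
    case 2
    then show ?thesis using alloc_eq_b_iff[of "c i * g h"] ds_b_less_ds_0 by (simp add: wf_theta_def)
  next
    case 3
    then show ?thesis by (simp add: wf_theta_def alloc_def)
  qed
qed

end

lemma sum_pair_le:
  fixes f :: "'a \<Rightarrow> 'b::ordered_comm_monoid_add"
  assumes "finite A" "\<And>x. x \<in> A \<Longrightarrow> 0 \<le> f x" "i \<in> A" "j \<in> A" "i \<noteq> j"
  shows "f i + f j \<le> sum f A"
  using sum_mono2[of A "{i, j}" f] assms by auto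

locale water_filling = decreasing_marginal +
  fixes k :: nat and c :: "nat \<Rightarrow> real"
  assumes k_ge_2: "2 \<le> k"
    and c_antimono: "\<And>i j. 1 \<le> i \<Longrightarrow> i \<le> j \<Longrightarrow> j \<le> k \<Longrightarrow> c j \<le> c i"
    and c_pos: "\<And>i. 1 \<le> i \<Longrightarrow> i \<le> k \<Longrightarrow> 0 < c i"
begin

definition total_alloc :: "real \<Rightarrow> real" where
  "total_alloc l = (\<Sum>i=1..k. alloc (c i * l))"

lemma wf_beta_eq_total_alloc: "wf_beta ds b k c g h = total_alloc (g h)"
  by (simp add: wf_beta_def total_alloc_def wf_theta_eq_alloc)

lemma continuous_total_alloc: "continuous_on A total_alloc"
proof -
  have "continuous_on A (alloc \<circ> (\<lambda>l. c i * l))" for i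
    by (intro continuous_on_compose continuous_alloc continuous_intros)
  then show ?thesis
    unfolding total_alloc_def by (intro continuous_on_sum) (simp add: o_def)
qed

lemma alloc_eq_b_below:
  assumes "l \<le> ds b / c 1" "i \<in> {1..k}"
  shows "alloc (c i * l) = b"
proof -
  have "c i * l \<le> ds b"
  proof (cases "0 \<le> l")
    case True
    then have "c i * l \<le> c 1 * l" using assms c_antimono by (intro mult_right_mono) auto
    also have "\<dots> \<le> ds b" using assms c_pos[of 1] k_ge_2 by (simp add: field_simps)
    finally show ?thesis .
  next
    case False
    then have "c i * l < 0" using assms(2) c_pos[of i] by (simp add: mult_pos_neg)
    then show ?thesis using ds_b_pos by simp
  qed
  then show ?thesis by (simp add: alloc_eq_b_iff)
qed

lemma alloc_eq_0_above:
  assumes "ds 0 / c k \<le> l" "i \<in> {1..k}"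
  shows "alloc (c i * l) = 0"
proof -
  have "0 < ds 0 / c k" using ds_b_less_ds_0 ds_b_pos c_pos[of k] k_ge_2 by simp
  then have "ds 0 \<le> c k * l" using assms c_pos[of k] k_ge_2 by (simp add: field_simps)
  also have "\<dots> \<le> c i * l"
    using assms \<open>0 < ds 0 / c k\<close> c_antimono by (intro mult_right_mono) auto
  finally show ?thesis by (simp add: alloc_eq_0_iff)
qed

lemma total_alloc_below: "l \<le> ds b / c 1 \<Longrightarrow> total_alloc l = k * b"
  by (simp add: total_alloc_def alloc_eq_b_below)

lemma total_alloc_above: "ds 0 / c k \<le> l \<Longrightarrow> total_alloc l = 0"
  by (simp add: total_alloc_def alloc_eq_0_above)

lemma level_bounds_ordered: "ds b / c 1 < ds 0 / c k"
proof -
  have "ds b / c 1 \<le> ds b / c k"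
    using ds_b_pos c_pos c_antimono[of 1 k] k_ge_2 by (intro divide_left_mono) auto
  also have "\<dots> < ds 0 / c k"
    using ds_b_less_ds_0 c_pos[of k] k_ge_2 by (intro divide_strict_right_mono) auto
  finally show ?thesis .
qed

lemma total_alloc_eq_b_exists: "\<exists>l \<in> {ds b / c 1..ds 0 / c k}. total_alloc l = b"
proof -
  have "b \<le> k * b" using k_ge_2 b_pos by simp
  then have "\<exists>l. ds b / c 1 \<le> l \<and> l \<le> ds 0 / c k \<and> total_alloc l = b"
    using level_bounds_ordered b_pos
    by (intro IVT2' continuous_total_alloc) (auto simp: total_alloc_below total_alloc_above)
  then show ?thesis by auto
qed

lemma total_alloc_eq_b_imp_pos:
  assumes "total_alloc l = b"
  shows "0 < l"
proof (rule ccontr)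
  assume "\<not> 0 < l"
  moreover have "0 < ds b / c 1" using ds_b_pos c_pos[of 1] k_ge_2 by simp
  ultimately have "total_alloc l = k * b" by (intro total_alloc_below) simp
  with assms k_ge_2 b_pos show False by simp
qed

lemma alloc_level_unique:
  assumes "total_alloc l = b" "total_alloc m = b" "i \<in> {1..k}"
  shows "alloc (c i * l) = alloc (c i * m)"
proof -
  have ordered: "alloc (c i * m) = alloc (c i * l)"
    if eq: "total_alloc l = total_alloc m" and le: "l \<le> m" for l m
  proof (rule sum_mono_inv[of "\<lambda>j. alloc (c j * m)" "{1..k}" "\<lambda>j. alloc (c j * l)"])
    show "(\<Sum>j=1..k. alloc (c j * m)) = (\<Sum>j=1..k. alloc (c j * l))"
      using eq by (simp add: total_alloc_def)
    show "alloc (c j * m) \<le> alloc (c j * l)" if "j \<in> {1..k}" for j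
      using le c_pos[of j] that by (intro alloc_antimono mult_left_mono) auto
  qed (use assms(3) in auto)
  from assms(1,2) have "total_alloc l = total_alloc m" by simp
  then show ?thesis
    using ordered[of l m] ordered[of m l] by (cases "l \<le> m") simp_all
qed

lemma cap_solution_alloc:
  assumes level: "total_alloc l = b"
  shows "cap_solution ds b k c (\<lambda>i. alloc (c i * l))"
proof -
  define th where "th i = alloc (c i * l)" for i
  have l_pos: "0 < l" using total_alloc_eq_b_imp_pos[OF level] .
  have nonneg: "\<forall>i\<in>{1..k}. 0 \<le> th i" using alloc_in by (simp add: th_def)
  have sum: "(\<Sum>i=1..k. th i) = b" using level by (simp add: th_def total_alloc_def)
  have c_l_antimono: "c j * l \<le> c i * l" if "i \<in> {1..k}" "j \<in> {1..k}" "i \<le> j" for i j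
    using that c_antimono l_pos by (intro mult_right_mono) auto
  have mono: "th i \<le> th j" if "i \<in> {1..k}" "j \<in> {1..k}" "i \<le> j" for i j
    unfolding th_def using c_l_antimono[OF that] by (rule alloc_antimono)
  have pair: "th i + th j \<le> b" if "i \<in> {1..k}" "j \<in> {1..k}" "i < j" for i j
    using sum_pair_le[of "{1..k}" th i j] nonneg sum that by simp
  have interior: "ds (th j) / ds (th i) = c j / c i"
    if ij: "i \<in> {1..k}" "j \<in> {1..k}" "i < j" "th i > 0" for i j
  proof -
    have "c i * l < ds 0" using ij alloc_eq_0_iff[of "c i * l"] by (auto simp: th_def)
    moreover have "ds b < c j * l"
      using pair[OF ij(1-3)] ij(4) alloc_eq_b_iff[of "c j * l"] by (auto simp: th_def)
    moreover note c_l_antimono[OF ij(1,2)] ij(3)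
    ultimately have "ds (th i) = c i * l" "ds (th j) = c j * l"
      by (auto simp: th_def ds_alloc)
    then show ?thesis using l_pos by simp
  qed
  have boundary: "c j / c i \<le> ds (th j) / ds 0"
    if ij: "i \<in> {1..k}" "j \<in> {1..k}" "th i < th j" "th i = 0" for i j
  proof -
    have "ds 0 \<le> c i * l" using ij by (simp add: th_def alloc_eq_0_iff)
    moreover have "c j * l < ds 0" using ij alloc_eq_0_iff[of "c j * l"] by (auto simp: th_def)
    then have "c j * l \<le> ds (th j)" by (simp add: th_def ds_alloc)
    moreover have "0 < ds 0" using ds_b_less_ds_0 ds_b_pos by simp
    moreover have "0 < c j * l" using c_pos ij l_pos by simp
    ultimately have "c j * l / (c i * l) \<le> ds (th j) / ds 0"
      by (intro frac_le) linarith+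
    then show ?thesis using l_pos by simp
  qed
  show ?thesis
    unfolding cap_solution_def th_def[symmetric]
    using nonneg sum mono interior boundary by blast
qed

lemma cap_solution_level:
  assumes cap: "cap_solution ds b k c th"
  shows "\<exists>l. total_alloc l = b \<and> (\<forall>i\<in>{1..k}. th i = alloc (c i * l))"
proof -
  have nonneg: "\<forall>i\<in>{1..k}. 0 \<le> th i" and sum: "(\<Sum>i=1..k. th i) = b"
    and mono: "\<forall>i\<in>{1..k}. \<forall>j\<in>{1..k}. i \<le> j \<longrightarrow> th i \<le> th j"
    and interior: "\<forall>i\<in>{1..k}. \<forall>j\<in>{1..k}. i < j \<and> th i \<le> th j \<and> 0 < th i \<longrightarrow>
        ds (th j) / ds (th i) = c j / c i"
    and boundary: "\<forall>i\<in>{1..k}. \<forall>j\<in>{1..k}. i < j \<and> th i < th j \<and> th i = 0 \<longrightarrow>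
        c j / c i \<le> ds (th j) / ds 0"
    using cap unfolding cap_solution_def by blast+
  have k: "k \<in> {1..k}" using k_ge_2 by simp
  have le_b: "th i \<le> b" if "i \<in> {1..k}" for i
    using member_le_sum[of i "{1..k}" th] nonneg that sum by auto
  have ds_pos: "0 < ds x" if "x \<in> {0..b}" for x
    using ds_b_pos ds_strict_antimono[of x b] that by (cases "x = b") auto
  have th_k_pos: "0 < th k"
  proof (rule ccontr)
    assume "\<not> 0 < th k"
    moreover have "th i \<le> th k" if "i \<in> {1..k}" for i
      using mono that k by auto
    ultimately have "th i = 0" if "i \<in> {1..k}" for i
      using nonneg that by (meson order.antisym not_less order.trans)
    then show False using sum b_pos by simp
  qed
  define l where "l = ds (th k) / c k"
  \<comment> \<open>\<open>th k > 0\<close>: condition (iii) ties positive shares to it, condition (iv) zero shares\<close>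
  have eq: "th i = alloc (c i * l)" if i: "i \<in> {1..k}" for i
  proof (cases "0 < th i")
    case True
    have "ds (th i) = c i * l"
    proof (cases "i = k")
      case False
      with i have "i < k" "th i \<le> th k" using mono k by auto
      then have "ds (th k) / ds (th i) = c k / c i" using interior i k True by blast
      moreover have "0 < ds (th i)" using ds_pos le_b[OF i] True by simp
      ultimately show ?thesis using c_pos[of i] c_pos[of k] i k by (auto simp: l_def field_simps)
    qed (use c_pos[of k] k in \<open>simp add: l_def\<close>)
    then show ?thesis using alloc_ds[of "th i"] le_b[OF i] i nonneg by simp
  next
    case False
    then have "th i = 0" using nonneg i by force
    then have "i \<noteq> k" using th_k_pos by auto
    with i have "i < k" by simp
    then have "c k / c i \<le> ds (th k) / ds 0" using boundary i k th_k_pos \<open>th i = 0\<close> by auto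
    then have "ds 0 \<le> c i * l"
      using c_pos[of i] c_pos[of k] i k ds_pos[of 0] b_pos by (simp add: l_def field_simps)
    then show ?thesis using \<open>th i = 0\<close> by (simp add: alloc_eq_0_iff)
  qed
  then have "total_alloc l = b"
    using sum unfolding total_alloc_def by (metis (no_types, lifting) sum.cong)
  with eq show ?thesis by blast
qed

lemma cap_solution_eq_alloc:
  assumes "cap_solution ds b k c th" "total_alloc l = b" "i \<in> {1..k}"
  shows "th i = alloc (c i * l)"
proof -
  obtain m where "total_alloc m = b" "\<forall>i\<in>{1..k}. th i = alloc (c i * m)"
    using cap_solution_level[OF assms(1)] by blast
  then show ?thesis using alloc_level_unique[of m l i] assms(2,3) by simp
qed

lemma auxiliary_function_level:
  assumes aux: "auxiliary_function ds b k c I g" and level: "l \<in> {ds b / c 1..ds 0 / c k}"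
  shows "\<exists>h\<in>I. g h = l"
proof -
  obtain hlo hhi where I: "is_interval I" and g: "continuous_on I g"
    and h: "hlo \<in> I" "hhi \<in> I" "hlo < hhi" "g hhi \<le> ds b / c 1" "ds 0 / c k \<le> g hlo"
    using aux unfolding auxiliary_function_def by blast
  have sub: "{hlo..hhi} \<subseteq> I" using mem_is_interval_1_I[OF I h(1,2)] by auto
  have "\<exists>h. hlo \<le> h \<and> h \<le> hhi \<and> g h = l"
    using level h by (intro IVT2' continuous_on_subset[OF g sub]) auto
  then show ?thesis using sub by auto
qed

end

theorem theorem3:
  fixes s ds :: "real \<Rightarrow> real" and B b :: real and k :: nat and c :: "nat \<Rightarrow> real"
  assumes s0: "s 0 = 0"
    and s_mono: "\<forall>x\<in>{0..B}. \<forall>y\<in>{0..B}. x < y \<longrightarrow> s x < s y"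
    and s_conc: "strictly_concave_on {0..B} s"
    and s_deriv: "\<forall>x\<in>{0..B}. (s has_real_derivative ds x) (at x within {0..B})"
    and ds_cont: "continuous_on {0..B} ds"
    and ds_pos: "\<forall>x\<in>{0..B}. ds x > 0"
    and b: "0 < b" "b \<le> B"
    and k: "k \<ge> 2"
    and c_mono: "\<forall>i\<in>{1..k}. \<forall>j\<in>{1..k}. i \<le> j \<longrightarrow> c j \<le> c i"
    and c_pos: "\<forall>i\<in>{1..k}. c i > 0"
  shows "(\<exists>th. cap_solution ds b k c th \<and>
            (\<forall>th'. cap_solution ds b k c th' \<longrightarrow> (\<forall>i\<in>{1..k}. th' i = th i))) \<and>
         (\<forall>I g. auxiliary_function ds b k c I g \<longrightarrow>
            (\<forall>h\<in>I. wf_beta ds b k c g h = b \<longrightarrow>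
               (\<forall>th. cap_solution ds b k c th \<longrightarrow> (\<forall>i\<in>{1..k}. th i = wf_theta ds b c g i h))) \<and>
            (\<exists>h\<in>I. wf_beta ds b k c g h = b))"
proof -
  interpret water_filling ds b k c
  proof
    show "\<And>x y. 0 \<le> x \<Longrightarrow> x < y \<Longrightarrow> y \<le> b \<Longrightarrow> ds y < ds x"
      using strictly_concave_on_deriv_strict_antimono[OF s_conc] s_deriv b by auto
    show "continuous_on {0..b} ds" using ds_cont b by (auto elim: continuous_on_subset)
  qed (use ds_pos b k c_mono c_pos in auto)
  obtain l where l_bounds: "l \<in> {ds b / c 1..ds 0 / c k}" and level: "total_alloc l = b"
    using total_alloc_eq_b_exists by blast
  show ?thesis
  proof (intro conjI allI impI)
    show "\<exists>th. cap_solution ds b k c th \<and>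
        (\<forall>th'. cap_solution ds b k c th' \<longrightarrow> (\<forall>i\<in>{1..k}. th' i = th i))"
      using cap_solution_alloc[OF level] cap_solution_eq_alloc[OF _ level] by blast
    fix I g assume aux: "auxiliary_function ds b k c I g"
    show "\<forall>h\<in>I. wf_beta ds b k c g h = b \<longrightarrow>
        (\<forall>th. cap_solution ds b k c th \<longrightarrow> (\<forall>i\<in>{1..k}. th i = wf_theta ds b c g i h))"
      by (auto simp: wf_beta_eq_total_alloc wf_theta_eq_alloc intro: cap_solution_eq_alloc)
    show "\<exists>h\<in>I. wf_beta ds b k c g h = b"
      using auxiliary_function_level[OF aux l_bounds] level by (auto simp: wf_beta_eq_total_alloc)
  qed
qed

end
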